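(* Let $(Q,B,\mu)$ be a measure space with a non-trivial $\sigma$-finite measure $\mu$, let $0<a<b\le1$, and let $\psi:(a,b)\to(0,\infty)$ be continuous with $\inf_{p\in(a,b)}\psi(p)>0$. Then the quasi-Grand Lebesgue space $G\psi_{a,b}$ is complete with respect to the quasi-distance $\rho(x,y)=\|x-y\|_{G\psi_{a,b}}$; i.e. every Cauchy sequence for $\rho$ converges in $\rho$ to an element of $G\psi_{a,b}$.
   Context: For $p>0$, $\|f\|_p=\left(\int_Q|f|^p\,d\mu\right)^{1/p}$. $G\psi_{a,b}$ is the space of measurable $f:Q\to\mathbb R$ (modulo $\mu$-a.e. equality) with $\|f\|_{G\psi_{a,b}}:=\sup_{p\in(a,b)}\|f\|_p/\psi(p)<\infty$. *)

theory Defs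
  imports "HOL-Analysis.Analysis"
begin

definition Lp_qnorm :: "'a measure \<Rightarrow> real \<Rightarrow> ('a \<Rightarrow> real) \<Rightarrow> ennreal" where
  "Lp_qnorm M p f =
     (let I = (\<integral>\<^sup>+ x. ennreal (\<bar>f x\<bar> powr p) \<partial>M)
      in if I = \<infinity> then \<infinity> else ennreal ((enn2real I) powr (1 / p)))"

definition G_qnorm :: "'a measure \<Rightarrow> (real \<Rightarrow> real) \<Rightarrow> real \<Rightarrow> real \<Rightarrow> ('a \<Rightarrow> real) \<Rightarrow> ennreal" where
  "G_qnorm M \<psi> a b f = (SUP p\<in>{a<..<b}. Lp_qnorm M p f / ennreal (\<psi> p))"

text \<open>The space G psi_{a,b} (as a set of representatives; a.e. equality is irrelevant for
  completeness as stated since the quasi-distance does not see it).\<close>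
definition G_space :: "'a measure \<Rightarrow> (real \<Rightarrow> real) \<Rightarrow> real \<Rightarrow> real \<Rightarrow> ('a \<Rightarrow> real) set" where
  "G_space M \<psi> a b = {f. f \<in> borel_measurable M \<and> G_qnorm M \<psi> a b f < \<infinity>}"

end

theory Submission
  imports Defs
begin

(* For 0 < p \<le> 1 the functional h \<mapsto> \<integral>|h|^p is subadditive, and the G-norm of h is at most e
   iff \<integral>|h|^p \<le> (e \<psi>(p))^p for every p in (a,b). A G-Cauchy sequence is therefore Cauchy for
   \<integral>|f_m - f_n|^p at a single fixed p, so a fast subsequence converges a.e. to some g, as in the
   proof of Riesz-Fischer. Fatou's lemma, applied for each p separately, shows that the G-norm is
   lower semicontinuous under a.e. convergence, whence G(f_n - g) \<le> e for large n; and g lies in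
   the space by the quasi-triangle inequality G(u + v) \<le> 2^(1/a) (G u + G v). *)

lemma divide_ennreal_le_iff:
  fixes x :: ennreal
  assumes "0 < y" "0 \<le> e"
  shows "x / ennreal y \<le> ennreal e \<longleftrightarrow> x \<le> ennreal (e * y)"
proof (cases x rule: ennreal_cases)
  case (real r)
  then show ?thesis using assms by (simp add: divide_ennreal pos_divide_le_eq)
next
  case top
  have "top / ennreal y = top" using assms by (simp add: ennreal_divide_eq_top_iff)
  then show ?thesis using top by (simp add: top_unique)
qed

lemma powr_add_le_add_powr:
  fixes x y p :: real
  assumes "0 \<le> x" "0 \<le> y" "0 < p" "p \<le> 1"
  shows "(x + y) powr p \<le> x powr p + y powr p"
proof (cases "x + y = 0")
  case True
  then show ?thesis using assms by simp
next
  case False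
  define s where "s = x + y"
  have s: "0 < s" using False assms s_def by simp
  have "x / s \<le> (x / s) powr p" "y / s \<le> (y / s) powr p"
    using powr_mono'[of p 1] assms s s_def by simp_all
  then have "1 \<le> (x / s) powr p + (y / s) powr p"
    using s s_def by (metis add_mono add_divide_distrib divide_self less_irrefl)
  also have "\<dots> = (x powr p + y powr p) / s powr p"
    by (simp add: powr_divide add_divide_distrib)
  finally show ?thesis using s s_def by (simp add: le_divide_eq)
qed

lemma Lp_qnorm_le_iff:
  assumes "0 < p" "0 \<le> c"
  shows "Lp_qnorm M p h \<le> ennreal c \<longleftrightarrow>
    (\<integral>\<^sup>+ x. ennreal (\<bar>h x\<bar> powr p) \<partial>M) \<le> ennreal (c powr p)"
proof (cases "\<integral>\<^sup>+ x. ennreal (\<bar>h x\<bar> powr p) \<partial>M" rule: ennreal_cases)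
  case (real r)
  have "r powr (1 / p) \<le> c \<longleftrightarrow> r \<le> c powr p"
    using assms real powr_mono2[of p "r powr (1 / p)" c] powr_mono2[of "1 / p" r "c powr p"]
    by (auto simp: powr_powr)
  then show ?thesis using real assms by (simp add: Lp_qnorm_def)
next
  case top
  then show ?thesis by (simp add: Lp_qnorm_def top_unique)
qed

lemma G_qnorm_le_iff:
  assumes "0 \<le> a" "\<forall>p\<in>{a<..<b}. 0 < \<psi> p" "0 \<le> e"
  shows "G_qnorm M \<psi> a b h \<le> ennreal e \<longleftrightarrow>
    (\<forall>p\<in>{a<..<b}. (\<integral>\<^sup>+ x. ennreal (\<bar>h x\<bar> powr p) \<partial>M) \<le> ennreal ((e * \<psi> p) powr p))"
  unfolding G_qnorm_def SUP_le_iff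
proof (intro ball_cong refl)
  fix p assume "p \<in> {a<..<b}"
  then have "0 < \<psi> p" "0 < p" using assms by auto
  then show "Lp_qnorm M p h / ennreal (\<psi> p) \<le> ennreal e \<longleftrightarrow>
    (\<integral>\<^sup>+ x. ennreal (\<bar>h x\<bar> powr p) \<partial>M) \<le> ennreal ((e * \<psi> p) powr p)"
    using assms by (simp add: divide_ennreal_le_iff Lp_qnorm_le_iff)
qed

lemma G_qnorm_minus_commute:
  "G_qnorm M \<psi> a b (\<lambda>x. u x - v x) = G_qnorm M \<psi> a b (\<lambda>x. v x - u x)"
  by (simp add: G_qnorm_def Lp_qnorm_def abs_minus_commute)

lemma nn_integral_abs_powr_add_le:
  assumes "0 < p" "p \<le> 1" "u \<in> borel_measurable M" "v \<in> borel_measurable M"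
  shows "(\<integral>\<^sup>+ x. ennreal (\<bar>u x + v x\<bar> powr p) \<partial>M) \<le>
    (\<integral>\<^sup>+ x. ennreal (\<bar>u x\<bar> powr p) \<partial>M) + (\<integral>\<^sup>+ x. ennreal (\<bar>v x\<bar> powr p) \<partial>M)"
proof -
  have "\<bar>u x + v x\<bar> powr p \<le> \<bar>u x\<bar> powr p + \<bar>v x\<bar> powr p" for x
  proof -
    have "\<bar>u x + v x\<bar> powr p \<le> (\<bar>u x\<bar> + \<bar>v x\<bar>) powr p"
      using assms by (intro powr_mono2) (auto simp: abs_triangle_ineq)
    also have "\<dots> \<le> \<bar>u x\<bar> powr p + \<bar>v x\<bar> powr p"
      using assms by (intro powr_add_le_add_powr) auto
    finally show ?thesis .
  qed
  then have "(\<integral>\<^sup>+ x. ennreal (\<bar>u x + v x\<bar> powr p) \<partial>M) \<le>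
     (\<integral>\<^sup>+ x. ennreal (\<bar>u x\<bar> powr p) + ennreal (\<bar>v x\<bar> powr p) \<partial>M)"
    by (intro nn_integral_mono) (simp add: ennreal_plus[symmetric] del: ennreal_plus)
  also have "\<dots> = (\<integral>\<^sup>+ x. ennreal (\<bar>u x\<bar> powr p) \<partial>M) + (\<integral>\<^sup>+ x. ennreal (\<bar>v x\<bar> powr p) \<partial>M)"
    using assms by (intro nn_integral_add) auto
  finally show ?thesis .
qed

lemma G_qnorm_add_le:
  assumes "0 < a" "b \<le> 1" "\<forall>p\<in>{a<..<b}. 0 < \<psi> p"
    and "u \<in> borel_measurable M" "v \<in> borel_measurable M"
    and "0 \<le> U" "0 \<le> V" "G_qnorm M \<psi> a b u \<le> ennreal U" "G_qnorm M \<psi> a b v \<le> ennreal V"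
  shows "G_qnorm M \<psi> a b (\<lambda>x. u x + v x) \<le> ennreal (2 powr (1 / a) * (U + V))"
proof -
  have "(\<integral>\<^sup>+ x. ennreal (\<bar>u x + v x\<bar> powr p) \<partial>M) \<le>
      ennreal ((2 powr (1 / a) * (U + V) * \<psi> p) powr p)"
    if p: "p \<in> {a<..<b}" for p
  proof -
    have "0 < p" "p \<le> 1" "a < p" "0 < \<psi> p" using p assms by auto
    have "(\<integral>\<^sup>+ x. ennreal (\<bar>u x + v x\<bar> powr p) \<partial>M) \<le>
        (\<integral>\<^sup>+ x. ennreal (\<bar>u x\<bar> powr p) \<partial>M) + (\<integral>\<^sup>+ x. ennreal (\<bar>v x\<bar> powr p) \<partial>M)"
      using \<open>0 < p\<close> \<open>p \<le> 1\<close> assms by (intro nn_integral_abs_powr_add_le)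
    also have "\<dots> \<le> ennreal ((U * \<psi> p) powr p) + ennreal ((V * \<psi> p) powr p)"
      using assms p by (intro add_mono) (auto simp: G_qnorm_le_iff)
    also have "\<dots> = ennreal ((U * \<psi> p) powr p + (V * \<psi> p) powr p)"
      by simp
    also have "\<dots> \<le> ennreal ((2 powr (1 / a) * (U + V) * \<psi> p) powr p)"
    proof (rule ennreal_leI)
      define W where "W = ((U + V) * \<psi> p) powr p"
      have "(U * \<psi> p) powr p + (V * \<psi> p) powr p \<le> 2 * W"
        using assms \<open>0 < \<psi> p\<close> \<open>0 < p\<close> powr_mono2[of p "U * \<psi> p" "(U + V) * \<psi> p"]
          powr_mono2[of p "V * \<psi> p" "(U + V) * \<psi> p"] by (simp add: W_def)
      also have "\<dots> \<le> (2 powr (1 / a)) powr p * W"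
        using powr_mono[of 1 "p / a" 2] \<open>a < p\<close> \<open>0 < a\<close>
        by (intro mult_right_mono) (auto simp: W_def powr_powr)
      also have "\<dots> = (2 powr (1 / a) * (U + V) * \<psi> p) powr p"
        using assms \<open>0 < \<psi> p\<close> by (simp add: W_def powr_mult mult.assoc)
      finally show "(U * \<psi> p) powr p + (V * \<psi> p) powr p \<le> (2 powr (1 / a) * (U + V) * \<psi> p) powr p" .
    qed
    finally show ?thesis .
  qed
  then show ?thesis using assms by (simp add: G_qnorm_le_iff)
qed

lemma summable_if_summable_abs_powr:
  fixes d :: "nat \<Rightarrow> real"
  assumes "0 < p" "p \<le> 1" "summable (\<lambda>k. \<bar>d k\<bar> powr p)"
  shows "summable d"
proof (rule summable_comparison_test_ev[OF _ assms(3)])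
  have "(\<lambda>k. \<bar>d k\<bar> powr p) \<longlonglongrightarrow> 0"
    using assms(3) by (rule summable_LIMSEQ_zero)
  then have "eventually (\<lambda>k. \<bar>d k\<bar> powr p < 1) sequentially"
    by (rule order_tendstoD) simp
  then show "eventually (\<lambda>k. norm (d k) \<le> \<bar>d k\<bar> powr p) sequentially"
  proof eventually_elim
    case (elim k)
    have "\<bar>d k\<bar> \<le> 1"
    proof (rule ccontr)
      assume "\<not> \<bar>d k\<bar> \<le> 1"
      then have "1 \<le> \<bar>d k\<bar> powr p" using assms by (intro ge_one_powr_ge_zero) auto
      with elim show False by simp
    qed
    then show ?case
      using powr_mono'[of p 1 "\<bar>d k\<bar>"] assms by (cases "d k = 0") auto
  qed
qed

lemma AE_summable_if_summable_nn_integral_abs_powr: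
  assumes "0 < p" "p \<le> 1" "\<And>k. d k \<in> borel_measurable M"
    and "(\<Sum>k. \<integral>\<^sup>+ x. ennreal (\<bar>d k x\<bar> powr p) \<partial>M) \<noteq> \<infinity>"
  shows "AE x in M. summable (\<lambda>k. d k x)"
proof -
  have [measurable]: "\<And>k. d k \<in> borel_measurable M" by fact
  have "(\<integral>\<^sup>+ x. (\<Sum>k. ennreal (\<bar>d k x\<bar> powr p)) \<partial>M) = (\<Sum>k. \<integral>\<^sup>+ x. ennreal (\<bar>d k x\<bar> powr p) \<partial>M)"
    by (rule nn_integral_suminf) measurable
  then have "AE x in M. (\<Sum>k. ennreal (\<bar>d k x\<bar> powr p)) \<noteq> \<infinity>"
    using assms(4) by (intro nn_integral_PInf_AE) auto
  then show ?thesis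
  proof eventually_elim
    case (elim x)
    then have "summable (\<lambda>k. \<bar>d k x\<bar> powr p)"
      using summable_suminf_not_top[of "\<lambda>k. \<bar>d k x\<bar> powr p"] by simp
    with assms(1,2) show ?case
      by (rule summable_if_summable_abs_powr)
  qed
qed

lemma AE_convergent_subseq_if_Cauchy_nn_integral_abs_powr:
  fixes f :: "nat \<Rightarrow> 'a \<Rightarrow> real"
  assumes "0 < p" "p \<le> 1" "\<And>n. f n \<in> borel_measurable M"
    and Cauchy: "\<And>e. 0 < e \<Longrightarrow>
      \<exists>N. \<forall>m\<ge>N. \<forall>n\<ge>N. (\<integral>\<^sup>+ x. ennreal (\<bar>f m x - f n x\<bar> powr p) \<partial>M) \<le> ennreal e"
  obtains r g where "strict_mono r" "g \<in> borel_measurable M"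
    "AE x in M. (\<lambda>k. f (r k) x) \<longlonglongrightarrow> g x"
proof -
  have [measurable]: "\<And>n. f n \<in> borel_measurable M" by fact
  have "\<forall>k. \<exists>N. \<forall>m\<ge>N. \<forall>n\<ge>N.
      (\<integral>\<^sup>+ x. ennreal (\<bar>f m x - f n x\<bar> powr p) \<partial>M) \<le> ennreal ((1 / 2) ^ k)"
    using Cauchy by simp
  then obtain N where N: "\<And>k m n. N k \<le> m \<Longrightarrow> N k \<le> n \<Longrightarrow>
      (\<integral>\<^sup>+ x. ennreal (\<bar>f m x - f n x\<bar> powr p) \<partial>M) \<le> ennreal ((1 / 2) ^ k)"
    by metis
  define r where "r k = (\<Sum>j\<le>k. N j) + k" for k
  have "strict_mono r"
    unfolding strict_mono_Suc_iff r_def by simp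
  have N_le_r: "N k \<le> r k" for k
    using member_le_sum[of k "{..k}" N] by (auto simp: r_def)
  define d where "d k x = f (r (Suc k)) x - f (r k) x" for k x
  have d_le: "(\<integral>\<^sup>+ x. ennreal (\<bar>d k x\<bar> powr p) \<partial>M) \<le> ennreal ((1 / 2) ^ k)" for k
    unfolding d_def
  proof (rule N)
    show "N k \<le> r (Suc k)"
      using N_le_r[of k] strict_mono_leD[OF \<open>strict_mono r\<close>, of k "Suc k"] by simp
  qed (rule N_le_r)
  have "(\<Sum>k. \<integral>\<^sup>+ x. ennreal (\<bar>d k x\<bar> powr p) \<partial>M) \<le> (\<Sum>k. ennreal ((1 / 2) ^ k))"
    by (rule suminf_le[OF d_le summableI summableI])
  also have "\<dots> = ennreal (\<Sum>k. (1 / 2) ^ k)"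
    by (intro suminf_ennreal2) (auto intro: summable_geometric)
  also have "\<dots> = ennreal 2"
    using suminf_geometric[of "1 / 2 :: real"] by simp
  finally have "AE x in M. summable (\<lambda>k. d k x)"
    by (intro AE_summable_if_summable_nn_integral_abs_powr[OF assms(1,2)])
      (auto simp: d_def top_unique)
  then have convergent: "AE x in M. convergent (\<lambda>k. f (r k) x)"
  proof eventually_elim
    case (elim x)
    have "f (r 0) x + (\<Sum>k<n. d k x) = f (r n) x" for n
      using sum_lessThan_telescope[of "\<lambda>k. f (r k) x" n] by (simp add: d_def)
    moreover have "(\<lambda>n. f (r 0) x + (\<Sum>k<n. d k x)) \<longlonglongrightarrow> f (r 0) x + (\<Sum>k. d k x)"
      by (intro tendsto_add tendsto_const summable_LIMSEQ elim)
    ultimately have "(\<lambda>n. f (r n) x) \<longlonglongrightarrow> f (r 0) x + (\<Sum>k. d k x)"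
      by simp
    then show ?case
      by (rule convergentI)
  qed
  define g where "g x = lim (\<lambda>k. f (r k) x)" for x
  have "g \<in> borel_measurable M"
    unfolding g_def by measurable
  moreover have "AE x in M. (\<lambda>k. f (r k) x) \<longlonglongrightarrow> g x"
    using convergent by eventually_elim (simp add: g_def convergent_LIMSEQ_iff)
  ultimately show ?thesis
    using that \<open>strict_mono r\<close> by blast
qed

lemma nn_integral_abs_powr_le_liminf:
  assumes "0 < p" "\<And>k. h k \<in> borel_measurable M" "AE x in M. (\<lambda>k. h k x) \<longlonglongrightarrow> h' x"
  shows "(\<integral>\<^sup>+ x. ennreal (\<bar>h' x\<bar> powr p) \<partial>M) \<le>
    liminf (\<lambda>k. \<integral>\<^sup>+ x. ennreal (\<bar>h k x\<bar> powr p) \<partial>M)"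
proof -
  have "(\<integral>\<^sup>+ x. ennreal (\<bar>h' x\<bar> powr p) \<partial>M) =
      (\<integral>\<^sup>+ x. liminf (\<lambda>k. ennreal (\<bar>h k x\<bar> powr p)) \<partial>M)"
    using assms(3)
  proof (intro nn_integral_cong_AE, eventually_elim)
    case (elim x)
    then have "(\<lambda>k. ennreal (\<bar>h k x\<bar> powr p)) \<longlonglongrightarrow> ennreal (\<bar>h' x\<bar> powr p)"
      using assms(1) by (intro tendsto_ennrealI tendsto_powr' tendsto_intros) auto
    then show ?case
      by (rule lim_imp_Liminf[OF trivial_limit_sequentially, symmetric])
  qed
  also have "\<dots> \<le> liminf (\<lambda>k. \<integral>\<^sup>+ x. ennreal (\<bar>h k x\<bar> powr p) \<partial>M)"
    using assms by (intro nn_integral_liminf) auto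
  finally show ?thesis .
qed

lemma G_qnorm_le_if_AE_tendsto:
  assumes "0 \<le> a" "\<forall>p\<in>{a<..<b}. 0 < \<psi> p" "0 \<le> e" "\<And>k. h k \<in> borel_measurable M"
    and "AE x in M. (\<lambda>k. h k x) \<longlonglongrightarrow> h' x"
    and "eventually (\<lambda>k. G_qnorm M \<psi> a b (h k) \<le> ennreal e) sequentially"
  shows "G_qnorm M \<psi> a b h' \<le> ennreal e"
  unfolding G_qnorm_le_iff[OF assms(1-3)]
proof
  fix p assume p: "p \<in> {a<..<b}"
  have "eventually (\<lambda>k.
      (\<integral>\<^sup>+ x. ennreal (\<bar>h k x\<bar> powr p) \<partial>M) \<le> ennreal ((e * \<psi> p) powr p)) sequentially"
    using assms(6) by eventually_elim (use assms p in \<open>simp add: G_qnorm_le_iff\<close>)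
  then have "liminf (\<lambda>k. \<integral>\<^sup>+ x. ennreal (\<bar>h k x\<bar> powr p) \<partial>M) \<le> ennreal ((e * \<psi> p) powr p)"
    by (intro Liminf_le) auto
  moreover have "0 < p" using p assms(1) by simp
  ultimately show "(\<integral>\<^sup>+ x. ennreal (\<bar>h' x\<bar> powr p) \<partial>M) \<le> ennreal ((e * \<psi> p) powr p)"
    using nn_integral_abs_powr_le_liminf[OF _ assms(4,5)] order_trans by blast
qed

lemma ennreal_tendsto_0_if_eventually_le:
  fixes X :: "'b \<Rightarrow> ennreal"
  assumes "\<And>e. 0 < e \<Longrightarrow> eventually (\<lambda>n. X n \<le> ennreal e) F"
  shows "(X \<longlongrightarrow> 0) F"
proof (rule order_tendstoI)
  fix y :: ennreal assume "0 < y"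
  obtain e where "0 < e" "ennreal e < y"
  proof (cases y rule: ennreal_cases)
    case (real r)
    with \<open>0 < y\<close> show ?thesis by (intro that[of "r / 2"]) (auto simp: ennreal_less_iff)
  next
    case top
    then show ?thesis by (intro that[of 1]) auto
  qed
  then show "eventually (\<lambda>n. X n < y) F"
    using assms[of e] by (auto elim: eventually_mono)
qed simp

lemma nn_integral_abs_powr_Cauchy_if_G_Cauchy:
  fixes f :: "nat \<Rightarrow> 'a \<Rightarrow> real"
  assumes "0 \<le> a" "\<forall>p\<in>{a<..<b}. 0 < \<psi> p" "p \<in> {a<..<b}" "0 < \<epsilon>"
    and Cauchy: "\<And>e. 0 < e \<Longrightarrow>
      \<exists>N. \<forall>m\<ge>N. \<forall>n\<ge>N. G_qnorm M \<psi> a b (\<lambda>x. f m x - f n x) \<le> ennreal e"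
  shows "\<exists>N. \<forall>m\<ge>N. \<forall>n\<ge>N. (\<integral>\<^sup>+ x. ennreal (\<bar>f m x - f n x\<bar> powr p) \<partial>M) \<le> ennreal \<epsilon>"
proof -
  define e where "e = \<epsilon> powr (1 / p) / \<psi> p"
  have "0 < p" "0 < \<psi> p"
    using assms(1-3) by auto
  then have e: "0 < e" "(e * \<psi> p) powr p = \<epsilon>"
    using \<open>0 < \<epsilon>\<close> by (auto simp: e_def powr_powr)
  then obtain N where "\<forall>m\<ge>N. \<forall>n\<ge>N. G_qnorm M \<psi> a b (\<lambda>x. f m x - f n x) \<le> ennreal e"
    using Cauchy by blast
  then show ?thesis
    using assms(3) e
    by (auto simp: G_qnorm_le_iff[OF assms(1,2) less_imp_le[OF e(1)]] intro!: exI[of _ N])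
qed

lemma G_qnorm_diff_tendsto_0_if_AE_subseq_tendsto:
  fixes f :: "nat \<Rightarrow> 'a \<Rightarrow> real"
  assumes "0 \<le> a" "\<forall>p\<in>{a<..<b}. 0 < \<psi> p" "\<And>n. f n \<in> borel_measurable M"
    and Cauchy: "\<And>e. 0 < e \<Longrightarrow>
      \<exists>N. \<forall>m\<ge>N. \<forall>n\<ge>N. G_qnorm M \<psi> a b (\<lambda>x. f m x - f n x) \<le> ennreal e"
    and r: "strict_mono r" and lim: "AE x in M. (\<lambda>k. f (r k) x) \<longlonglongrightarrow> g x"
  shows "(\<lambda>n. G_qnorm M \<psi> a b (\<lambda>x. f n x - g x)) \<longlonglongrightarrow> 0"
proof (rule ennreal_tendsto_0_if_eventually_le)
  fix e :: real assume "0 < e"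
  then obtain N where N: "\<forall>m\<ge>N. \<forall>n\<ge>N. G_qnorm M \<psi> a b (\<lambda>x. f m x - f n x) \<le> ennreal e"
    using Cauchy by blast
  have "G_qnorm M \<psi> a b (\<lambda>x. f n x - g x) \<le> ennreal e" if "N \<le> n" for n
  proof (rule G_qnorm_le_if_AE_tendsto[where h = "\<lambda>k x. f n x - f (r k) x"])
    show "AE x in M. (\<lambda>k. f n x - f (r k) x) \<longlonglongrightarrow> f n x - g x"
      using lim by eventually_elim (intro tendsto_intros)
    show "eventually (\<lambda>k. G_qnorm M \<psi> a b (\<lambda>x. f n x - f (r k) x) \<le> ennreal e) sequentially"
      using eventually_ge_at_top[of N]
      by eventually_elim (use N \<open>N \<le> n\<close> seq_suble[OF r] order_trans in blast)
    show "(\<lambda>x. f n x - f (r k) x) \<in> borel_measurable M" for k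
      by (intro borel_measurable_diff assms(3))
  qed (use assms(1,2) \<open>0 < e\<close> in simp_all)
  then show "eventually (\<lambda>n. G_qnorm M \<psi> a b (\<lambda>x. f n x - g x) \<le> ennreal e) sequentially"
    by (auto simp: eventually_sequentially)
qed

lemma G_space_if_G_qnorm_diff_le:
  assumes "0 < a" "b \<le> 1" "\<forall>p\<in>{a<..<b}. 0 < \<psi> p"
    and f: "f \<in> G_space M \<psi> a b" and g: "g \<in> borel_measurable M"
    and "0 \<le> c" "G_qnorm M \<psi> a b (\<lambda>x. f x - g x) \<le> ennreal c"
  shows "g \<in> G_space M \<psi> a b"
proof -
  have "G_qnorm M \<psi> a b f < \<infinity>" "f \<in> borel_measurable M"
    using f by (simp_all add: G_space_def)
  then obtain K where K: "0 \<le> K" "G_qnorm M \<psi> a b f = ennreal K"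
    by (auto simp: less_top_ennreal)
  have "G_qnorm M \<psi> a b (\<lambda>x. g x - f x) \<le> ennreal c"
    using assms(7) by (metis G_qnorm_minus_commute)
  then have "G_qnorm M \<psi> a b (\<lambda>x. f x + (g x - f x)) \<le> ennreal (2 powr (1 / a) * (K + c))"
    using assms(1-3,6) K(1) K(2)[THEN eq_refl] \<open>f \<in> borel_measurable M\<close> g
    by (intro G_qnorm_add_le) (simp_all add: borel_measurable_diff)
  then show ?thesis
    using g le_less_trans[OF _ ennreal_less_top] by (simp add: G_space_def)
qed

theorem theorem4p2:
  fixes M :: "'a measure" and \<psi> :: "real \<Rightarrow> real" and a b :: real
    and f :: "nat \<Rightarrow> 'a \<Rightarrow> real"
  assumes "sigma_finite_measure M"
    and "emeasure M (space M) \<noteq> 0"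
    and "0 < a" and "a < b" and "b \<le> 1"
    and "continuous_on {a<..<b} \<psi>"
    and "\<forall>p\<in>{a<..<b}. \<psi> p > 0"
    and "(INF p\<in>{a<..<b}. \<psi> p) > 0"
    and "\<forall>n. f n \<in> G_space M \<psi> a b"
    and "\<forall>e>0. \<exists>N. \<forall>m\<ge>N. \<forall>n\<ge>N. G_qnorm M \<psi> a b (\<lambda>x. f m x - f n x) < ennreal e"
  shows "\<exists>g\<in>G_space M \<psi> a b. (\<lambda>n. G_qnorm M \<psi> a b (\<lambda>x. f n x - g x)) \<longlonglongrightarrow> 0"
proof -
  have f_meas: "\<And>n. f n \<in> borel_measurable M"
    using assms(9) by (simp add: G_space_def)
  have Cauchy: "\<exists>N. \<forall>m\<ge>N. \<forall>n\<ge>N. G_qnorm M \<psi> a b (\<lambda>x. f m x - f n x) \<le> ennreal e"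
    if "0 < e" for e
    using assms(10) that by (meson less_imp_le)
  have a_nonneg: "0 \<le> a"
    using assms(3) by simp
  define p where "p = (a + b) / 2"
  have p: "p \<in> {a<..<b}" "0 < p" "p \<le> 1"
    using assms(3-5) by (auto simp: p_def)
  obtain r g where r: "strict_mono r" and g: "g \<in> borel_measurable M"
    and lim: "AE x in M. (\<lambda>k. f (r k) x) \<longlonglongrightarrow> g x"
  proof (rule AE_convergent_subseq_if_Cauchy_nn_integral_abs_powr[where f = f, OF p(2,3) f_meas])
    show "\<exists>N. \<forall>m\<ge>N. \<forall>n\<ge>N. (\<integral>\<^sup>+ x. ennreal (\<bar>f m x - f n x\<bar> powr p) \<partial>M) \<le> ennreal \<epsilon>"
      if "0 < \<epsilon>" for \<epsilon>
      by (rule nn_integral_abs_powr_Cauchy_if_G_Cauchy[OF a_nonneg assms(7) p(1) that Cauchy])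
  qed
  have tendsto: "(\<lambda>n. G_qnorm M \<psi> a b (\<lambda>x. f n x - g x)) \<longlonglongrightarrow> 0"
    by (rule G_qnorm_diff_tendsto_0_if_AE_subseq_tendsto[OF a_nonneg assms(7) f_meas Cauchy r lim])
  then obtain N where "G_qnorm M \<psi> a b (\<lambda>x. f N x - g x) < 1"
    using order_tendstoD(2)[OF tendsto, of 1] by (auto simp: eventually_sequentially)
  then have "g \<in> G_space M \<psi> a b"
    using assms(9)
    by (intro G_space_if_G_qnorm_diff_le[where f = "f N", OF assms(3,5,7) _ g zero_le_one])
      (simp_all add: less_imp_le)
  with tendsto show ?thesis
    by blast
qed

end
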